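(* Let $G$ be a $1$-DCFG in Chomsky normal form, let $T$ be a derivation tree of a word $w\in L(G)$, and let $\pi=(i_1,j_1,k_1,l_1,i_2,j_2,k_2,l_2)$ and $\pi'=(i'_1,j'_1,k'_1,l'_1,i'_2,j'_2,k'_2,l'_2)$ be two $2$-pumps in $T$. Then, after possibly interchanging $\pi$ and $\pi'$, one of the following holds: 1. $l_2\le i'_1$; 2. $i_1\le i'_1\le l'_2\le j_1$ or $k_2\le i'_1\le l'_2\le l_2$; 3. $i_1\le i'_1\le j'_1\le j_1\le k_1\le k'_1\le l'_1\le l_1\le i_2\le i'_2\le j'_2\le j_2\le k_2\le k'_2\le l'_2\le l_2$; 4. $i_1\le i'_1\le j'_1\le k'_1\le j_1\le k_1\le l'_1\le l_1\le i_2\le i'_2\le j_2\le k_2\le j'_2\le k'_2\le l'_2\le l_2$; 5. $i_1\le i'_1\le j_1\le k_1\le j'_1\le k'_1\le l'_1\le l_1\le i_2\le i'_2\le j'_2\le k'_2\le j_2\le k_2\le l'_2\le l_2$; 6. $i_1\le i'_1\le j_1\le j'_1\le k'_1\le k_1\le l'_1\le l_1\le i_2\le i'_2\le j_2\le j'_2\le k'_2\le k_2\le l'_2\le l_2$; 7. $k_1\le i'_1\le l'_1\le l_1\le i_2\le i'_2\le l'_2\le j_2$; 8. $i_1\le i'_1\le l'_1\le j_1\le k_2\le i'_2\le l'_2\le l_2$; 9. $k_1\le i'_1\le l'_2\le l_1$ or $i_2\le i'_1\le l'_2\le j_2$; 10. $j_1\le i'_1\le l'_1\le k_1\le j_2\le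 i'_2\le l'_2\le k_2$; 11. $j_1\le i'_1\le l'_2\le k_1$ or $j_2\le i'_1\le l'_2\le k_2$; 12. $l_1\le i'_1\le l'_2\le i_2$.
   Context: Let $\Sigma$ be a finite alphabet and $1\notin\Sigma$ a separator; $\Sigma_1=\Sigma\cup\{1\}$, $\mathrm{rk}(w)=|w|_1$; for $\mathrm{rk}(u)\ge1$, $u\odot_1 v$ replaces the first occurrence of $1$ in $u$ by $v$. A $1$-DCFG in Chomsky normal form is $G=\langle N,\Sigma,P,S\rangle$ with nonterminals of rank $0$ or $1$, $\mathrm{rk}(S)=0$, and rules of the forms $A\to B\cdot C$ (with $\mathrm{rk}A=\mathrm{rk}B+\mathrm{rk}C\le1$), $A\to B\odot_1 C$ (with $\mathrm{rk}B=1$, $\mathrm{rk}A=\mathrm{rk}C$), where $B,C\in N\setminus\{S\}$, $A\to a$ with $a\in\Sigma_1$ ($\mathrm{rk}A=\mathrm{rk}a$), or $S\to\epsilon$. A derivation tree is a finite rooted ordered tree with nonterminal-labeled nodes, each internal node labeled $A$ having two children $B,C$ and annotated by a rule $A\to B\cdot C$ or $A\to B\odot_1 C$, each leaf labeled $A$ annotated by a rule $A\to a$ or $S\to\epsilon$. The yield of a node is the word of $\Sigma_1^*$ computed bottom-up ($a$ at a leaf with rule $A\to a$, $\epsilon$ for $S\to\epsilon$, concatenation resp. $\odot_1$ of the children's yields at internal nodes); $T$ is a derivation tree of $w$ if its root is labeled $S$ with yield $w$; $L(G)$ is the set of such $w$. The rank of a node is the rank of its label. Let $w=a_1\cdots a_n$;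 each letter of $\Sigma$ occurring in a yield comes from a leaf and thus corresponds to a position of $w$. For a node of rank $1$ its yield has the form $w_11w_2$ where $w_1=a_{i_1}\cdots a_{j_1-1}$ and $w_2=a_{i_2}\cdots a_{j_2-1}$ are contiguous segments of $w$ (as occurrences) with $i_1\le j_1\le i_2\le j_2$; the tuple $(i_1,j_1,i_2,j_2)$ is the constituent of the node. A node $v'$ is a direct descendant of $v$ if $v'$ is a proper descendant of $v$ and all nodes on the path between them (inclusive) have the same rank. A $2$-pump is a pair $(v,v')$ of internal nodes with the same label of rank $1$ such that $v'$ is a direct descendant of $v$; if the constituent of $v$ is $(i_1,l_1,i_2,l_2)$ and that of $v'$ is $(j_1,k_1,j_2,k_2)$, then $i_1\le j_1\le k_1\le l_1\le i_2\le j_2\le k_2\le l_2$ and the pump is identified with the tuple $(i_1,j_1,k_1,l_1,i_2,j_2,k_2,l_2)$. *)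

theory Defs
  imports Main
begin

text \<open>Symbols of \<Sigma>_1 = \<Sigma> \<union> {1}.\<close>
datatype 'a sym1 = Let 'a | One

fun rk_sym :: "'a sym1 \<Rightarrow> nat" where
  "rk_sym (Let a) = 0"
| "rk_sym One = 1"

text \<open>Rules: A -> B . C,  A -> B (.)_1 C,  A -> a (a in Sigma_1),  A -> epsilon (only for S).\<close>
datatype ('n,'a) rule =
    RConc 'n 'n 'n
  | RSubst 'n 'n 'n
  | RTerm 'n "'a sym1"
  | REps 'n

fun lhs :: "('n,'a) rule \<Rightarrow> 'n" where
  "lhs (RConc A B C) = A"
| "lhs (RSubst A B C) = A"
| "lhs (RTerm A a) = A"
| "lhs (REps A) = A"

definition cnf_1dcfg ::
  "'a set \<Rightarrow> 'n set \<Rightarrow> ('n,'a) rule set \<Rightarrow> 'n \<Rightarrow> ('n \<Rightarrow> nat) \<Rightarrow> bool" where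
  "cnf_1dcfg \<Sigma> N P S rk \<longleftrightarrow>
     finite \<Sigma> \<and> finite N \<and> finite P \<and> S \<in> N \<and> rk S = 0 \<and>
     (\<forall>A\<in>N. rk A \<le> 1) \<and>
     (\<forall>r\<in>P. (case r of
         RConc A B C \<Rightarrow> A \<in> N \<and> B \<in> N - {S} \<and> C \<in> N - {S} \<and>
                          rk A = rk B + rk C \<and> rk A \<le> 1
       | RSubst A B C \<Rightarrow> A \<in> N \<and> B \<in> N - {S} \<and> C \<in> N - {S} \<and>
                          rk B = 1 \<and> rk A = rk C
       | RTerm A a \<Rightarrow> A \<in> N \<and> (case a of Let b \<Rightarrow> b \<in> \<Sigma> | One \<Rightarrow> True) \<and>
                          rk A = rk_sym a
       | REps A \<Rightarrow> A = S))"

datatype ('n,'a) dtree =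
    Leaf "('n,'a) rule"
  | Node "('n,'a) rule" "('n,'a) dtree" "('n,'a) dtree"

fun root_rule :: "('n,'a) dtree \<Rightarrow> ('n,'a) rule" where
  "root_rule (Leaf r) = r"
| "root_rule (Node r l rr) = r"

definition label :: "('n,'a) dtree \<Rightarrow> 'n" where
  "label t = lhs (root_rule t)"

fun wf_tree :: "('n,'a) rule set \<Rightarrow> ('n,'a) dtree \<Rightarrow> bool" where
  "wf_tree P (Leaf r) \<longleftrightarrow> r \<in> P \<and> (case r of RTerm A a \<Rightarrow> True | REps A \<Rightarrow> True | _ \<Rightarrow> False)"
| "wf_tree P (Node r l rr) \<longleftrightarrow> r \<in> P \<and>
     (case r of RConc A B C \<Rightarrow> label l = B \<and> label rr = C
              | RSubst A B C \<Rightarrow> label l = B \<and> label rr = C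
              | _ \<Rightarrow> False) \<and> wf_tree P l \<and> wf_tree P rr"

text \<open>u (.)_1 v : replace the first occurrence of 1 in u by v.\<close>
fun subst1 :: "'a sym1 list \<Rightarrow> 'a sym1 list \<Rightarrow> 'a sym1 list" where
  "subst1 [] ys = []"
| "subst1 (x # xs) ys = (if x = One then ys @ xs else x # subst1 xs ys)"

fun yield :: "('n,'a) dtree \<Rightarrow> 'a sym1 list" where
  "yield (Leaf (RTerm A a)) = [a]"
| "yield (Leaf (REps A)) = []"
| "yield (Leaf (RConc A B C)) = []"
| "yield (Leaf (RSubst A B C)) = []"
| "yield (Node (RConc A B C) l r) = yield l @ yield r"
| "yield (Node (RSubst A B C) l r) = subst1 (yield l) (yield r)"
| "yield (Node (RTerm A a) l r) = []"
| "yield (Node (REps A) l r) = []"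

definition deriv_tree :: "('n,'a) rule set \<Rightarrow> 'n \<Rightarrow> ('n,'a) dtree \<Rightarrow> 'a list \<Rightarrow> bool" where
  "deriv_tree P S T w \<longleftrightarrow> wf_tree P T \<and> label T = S \<and> yield T = map Let w"

fun subtree_at :: "('n,'a) dtree \<Rightarrow> nat list \<Rightarrow> ('n,'a) dtree option" where
  "subtree_at t [] = Some t"
| "subtree_at (Leaf r) (d # p) = None"
| "subtree_at (Node r l rr) (d # p) =
     (if d = 0 then subtree_at l p else if d = 1 then subtree_at rr p else None)"

definition is_node :: "('n,'a) dtree \<Rightarrow> nat list \<Rightarrow> bool" where
  "is_node T v \<longleftrightarrow> subtree_at T v \<noteq> None"

definition internal :: "('n,'a) dtree \<Rightarrow> nat list \<Rightarrow> bool" where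
  "internal T v \<longleftrightarrow> (\<exists>r l rr. subtree_at T v = Some (Node r l rr))"

definition label_at :: "('n,'a) dtree \<Rightarrow> nat list \<Rightarrow> 'n" where
  "label_at T v = label (the (subtree_at T v))"

text \<open>To locate the segments of a node's yield inside w (also when they are empty),
  the yield is computed with zero-width boundary markers: node v contributes
  Mark v 0, Mark v 1 (just before its 1), Mark v 2 (just after its 1), Mark v 3.
  Markers are not letters; the position of a marker in w is 1 + the number of letters
  preceding it.\<close>
datatype 'a msym = MLet 'a | MHole | Mark "nat list" nat

fun msubst :: "'a msym list \<Rightarrow> 'a msym list \<Rightarrow> 'a msym list" where
  "msubst [] ys = []"
| "msubst (x # xs) ys = (if x = MHole then ys @ xs else x # msubst xs ys)"

fun mark_hole :: "nat list \<Rightarrow> 'a msym list \<Rightarrow> 'a msym list" where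
  "mark_hole p [] = []"
| "mark_hole p (x # xs) =
     (if x = MHole then Mark p 1 # MHole # Mark p 2 # xs else x # mark_hole p xs)"

definition wrap :: "nat list \<Rightarrow> 'a msym list \<Rightarrow> 'a msym list" where
  "wrap p xs = Mark p 0 # mark_hole p xs @ [Mark p 3]"

fun msym_of :: "'a sym1 \<Rightarrow> 'a msym" where
  "msym_of (Let a) = MLet a"
| "msym_of One = MHole"

fun myield :: "nat list \<Rightarrow> ('n,'a) dtree \<Rightarrow> 'a msym list" where
  "myield p (Leaf (RTerm A a)) = wrap p [msym_of a]"
| "myield p (Leaf (REps A)) = wrap p []"
| "myield p (Leaf (RConc A B C)) = wrap p []"
| "myield p (Leaf (RSubst A B C)) = wrap p []"
| "myield p (Node (RConc A B C) l r) = wrap p (myield (p @ [0]) l @ myield (p @ [1]) r)"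
| "myield p (Node (RSubst A B C) l r) = wrap p (msubst (myield (p @ [0]) l) (myield (p @ [1]) r))"
| "myield p (Node (RTerm A a) l r) = wrap p []"
| "myield p (Node (REps A) l r) = wrap p []"

fun is_mlet :: "'a msym \<Rightarrow> bool" where
  "is_mlet (MLet a) = True"
| "is_mlet MHole = False"
| "is_mlet (Mark p k) = False"

definition mpos :: "'a msym list \<Rightarrow> 'a msym \<Rightarrow> nat" where
  "mpos xs m = Suc (length (filter is_mlet (takeWhile (\<lambda>x. x \<noteq> m) xs)))"

text \<open>Constituent (i1, j1, i2, j2) of node v: its yield is a_{i1}..a_{j1-1} 1 a_{i2}..a_{j2-1}.\<close>
definition constituent :: "('n,'a) dtree \<Rightarrow> nat list \<Rightarrow> nat \<times> nat \<times> nat \<times> nat" where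
  "constituent T v =
     (let Y = myield [] T in
      (mpos Y (Mark v 0), mpos Y (Mark v 1), mpos Y (Mark v 2), mpos Y (Mark v 3)))"

definition direct_desc :: "('n \<Rightarrow> nat) \<Rightarrow> ('n,'a) dtree \<Rightarrow> nat list \<Rightarrow> nat list \<Rightarrow> bool" where
  "direct_desc rk T v v' \<longleftrightarrow>
     is_node T v \<and> is_node T v' \<and>
     (\<exists>q. q \<noteq> [] \<and> v' = v @ q \<and>
        (\<forall>k\<le>length q. rk (label_at T (v @ take k q)) = rk (label_at T v)))"

definition two_pump :: "('n \<Rightarrow> nat) \<Rightarrow> ('n,'a) dtree \<Rightarrow> nat list \<Rightarrow> nat list \<Rightarrow> bool" where
  "two_pump rk T v v' \<longleftrightarrow>
     internal T v \<and> internal T v' \<and> label_at T v = label_at T v' \<and>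
     rk (label_at T v) = 1 \<and> direct_desc rk T v v'"

definition pump_tuple :: "('n,'a) dtree \<Rightarrow> nat list \<Rightarrow> nat list \<Rightarrow>
    nat \<times> nat \<times> nat \<times> nat \<times> nat \<times> nat \<times> nat \<times> nat" where
  "pump_tuple T v v' =
     (case constituent T v of (i1, l1, i2, l2) \<Rightarrow>
      case constituent T v' of (j1, k1, j2, k2) \<Rightarrow> (i1, j1, k1, l1, i2, j2, k2, l2))"

definition pump_cases ::
  "nat \<times> nat \<times> nat \<times> nat \<times> nat \<times> nat \<times> nat \<times> nat \<Rightarrow>
   nat \<times> nat \<times> nat \<times> nat \<times> nat \<times> nat \<times> nat \<times> nat \<Rightarrow> bool" where
  "pump_cases \<pi> \<pi>' =
    (case \<pi> of (i1, j1, k1, l1, i2, j2, k2, l2) \<Rightarrow>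
     case \<pi>' of (i1', j1', k1', l1', i2', j2', k2', l2') \<Rightarrow>
       l2 \<le> i1'
     \<or> (sorted [i1, i1', l2', j1] \<or> sorted [k2, i1', l2', l2])
     \<or> sorted [i1, i1', j1', j1, k1, k1', l1', l1, i2, i2', j2', j2, k2, k2', l2', l2]
     \<or> sorted [i1, i1', j1', k1', j1, k1, l1', l1, i2, i2', j2, k2, j2', k2', l2', l2]
     \<or> sorted [i1, i1', j1, k1, j1', k1', l1', l1, i2, i2', j2', k2', j2, k2, l2', l2]
     \<or> sorted [i1, i1', j1, j1', k1', k1, l1', l1, i2, i2', j2, j2', k2', k2, l2', l2]
     \<or> sorted [k1, i1', l1', l1, i2, i2', l2', j2]
     \<or> sorted [i1, i1', l1', j1, k2, i2', l2', l2]
     \<or> (sorted [k1, i1', l2', l1] \<or> sorted [i2, i1', l2', j2])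
     \<or> sorted [j1, i1', l1', k1, j2, i2', l2', k2]
     \<or> (sorted [j1, i1', l2', k1] \<or> sorted [j2, i1', l2', k2])
     \<or> sorted [l1, i1', l2', i2])"

end

theory Submission
  imports Defs
begin

text \<open>
  Every node of rank 1 contributes four markers to the marked yield of the tree: the ends of the two
  segments of its constituent, around its hole. For two distinct nodes of rank 1 these quadruples
  are laminar: one node lies after the other, inside one of the three parts of the other (left
  segment, hole, right segment), or is nested in the other around its hole. Laminarity is preserved
  by concatenation, by substitution into the hole and by wrapping a node's markers around its
  yield, so by induction it holds for the whole derivation tree. In a 2-pump \<open>(v, v')\<close> the
  node \<open>v'\<close> lies on the spine of \<open>v\<close> and is therefore nested in \<open>v\<close> around its hole.
  For two 2-pumps this leaves finitely many relative orders of the sixteen marker indices, and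
  a case analysis shows that each of them is one of the twelve configurations. Constituent
  positions arise from marker indices by counting the letters before them, a monotone map, so
  the configuration carries over to the pumps.
\<close>

section \<open>Relative position of two index quadruples\<close>

definition quad_within_or_after ::
  "nat \<Rightarrow> nat \<Rightarrow> nat \<Rightarrow> nat \<Rightarrow> nat \<Rightarrow> nat \<Rightarrow> nat \<Rightarrow> nat \<Rightarrow> bool" where
  "quad_within_or_after x0 x1 x2 x3 y0 y1 y2 y3 \<longleftrightarrow>
     x3 < y0 \<or> (x0 < y0 \<and> y3 < x1) \<or> (x1 < y0 \<and> y3 < x2) \<or> (x2 < y0 \<and> y3 < x3)
     \<or> (x0 < y0 \<and> y1 < x1 \<and> x2 < y2 \<and> y3 < x3)"

definition quads_laminar ::
  "nat \<Rightarrow> nat \<Rightarrow> nat \<Rightarrow> nat \<Rightarrow> nat \<Rightarrow> nat \<Rightarrow> nat \<Rightarrow> nat \<Rightarrow> bool" where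
  "quads_laminar x0 x1 x2 x3 y0 y1 y2 y3 \<longleftrightarrow>
     quad_within_or_after x0 x1 x2 x3 y0 y1 y2 y3 \<or> quad_within_or_after y0 y1 y2 y3 x0 x1 x2 x3
     \<or> (x0 = y0 \<and> x1 = y1 \<and> x2 = y2 \<and> x3 = y3)"

lemma quads_laminar_sym:
  "quads_laminar x0 x1 x2 x3 y0 y1 y2 y3 \<Longrightarrow> quads_laminar y0 y1 y2 y3 x0 x1 x2 x3"
  unfolding quads_laminar_def by auto

lemma quads_laminarE:
  assumes "quads_laminar x0 x1 x2 x3 y0 y1 y2 y3"
  obtains "x3 < y0" | "x0 < y0" "y3 < x1" | "x1 < y0" "y3 < x2" | "x2 < y0" "y3 < x3"
    | "x0 < y0" "y1 < x1" "x2 < y2" "y3 < x3"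
    | "y3 < x0" | "y0 < x0" "x3 < y1" | "y1 < x0" "x3 < y2" | "y2 < x0" "x3 < y3"
    | "y0 < x0" "x1 < y1" "y2 < x2" "x3 < y3"
    | "x0 = y0" "x1 = y1" "x2 = y2" "x3 = y3"
  using assms unfolding quads_laminar_def quad_within_or_after_def by blast

lemma
  fixes i1 j1 k1 l1 i2 j2 k2 l2 i1' j1' k1' l1' i2' j2' k2' l2' :: nat
  shows
    pump_case_1: "l2 \<le> i1' \<Longrightarrow>
      pump_cases (i1, j1, k1, l1, i2, j2, k2, l2) (i1', j1', k1', l1', i2', j2', k2', l2')"
  and
    pump_case_2a: "sorted [i1, i1', l2', j1] \<Longrightarrow>
      pump_cases (i1, j1, k1, l1, i2, j2, k2, l2) (i1', j1', k1', l1', i2', j2', k2', l2')"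
  and
    pump_case_2b: "sorted [k2, i1', l2', l2] \<Longrightarrow>
      pump_cases (i1, j1, k1, l1, i2, j2, k2, l2) (i1', j1', k1', l1', i2', j2', k2', l2')"
  and
    pump_case_3: "sorted [i1, i1', j1', j1, k1, k1', l1', l1, i2, i2', j2', j2, k2, k2', l2', l2] \<Longrightarrow>
      pump_cases (i1, j1, k1, l1, i2, j2, k2, l2) (i1', j1', k1', l1', i2', j2', k2', l2')"
  and
    pump_case_4: "sorted [i1, i1', j1', k1', j1, k1, l1', l1, i2, i2', j2, k2, j2', k2', l2', l2] \<Longrightarrow>
      pump_cases (i1, j1, k1, l1, i2, j2, k2, l2) (i1', j1', k1', l1', i2', j2', k2', l2')"
  and
    pump_case_5: "sorted [i1, i1', j1, k1, j1', k1', l1', l1, i2, i2', j2', k2', j2, k2, l2', l2] \<Longrightarrow>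
      pump_cases (i1, j1, k1, l1, i2, j2, k2, l2) (i1', j1', k1', l1', i2', j2', k2', l2')"
  and
    pump_case_6: "sorted [i1, i1', j1, j1', k1', k1, l1', l1, i2, i2', j2, j2', k2', k2, l2', l2] \<Longrightarrow>
      pump_cases (i1, j1, k1, l1, i2, j2, k2, l2) (i1', j1', k1', l1', i2', j2', k2', l2')"
  and
    pump_case_7: "sorted [k1, i1', l1', l1, i2, i2', l2', j2] \<Longrightarrow>
      pump_cases (i1, j1, k1, l1, i2, j2, k2, l2) (i1', j1', k1', l1', i2', j2', k2', l2')"
  and
    pump_case_8: "sorted [i1, i1', l1', j1, k2, i2', l2', l2] \<Longrightarrow>
      pump_cases (i1, j1, k1, l1, i2, j2, k2, l2) (i1', j1', k1', l1', i2', j2', k2', l2')"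
  and
    pump_case_9a: "sorted [k1, i1', l2', l1] \<Longrightarrow>
      pump_cases (i1, j1, k1, l1, i2, j2, k2, l2) (i1', j1', k1', l1', i2', j2', k2', l2')"
  and
    pump_case_9b: "sorted [i2, i1', l2', j2] \<Longrightarrow>
      pump_cases (i1, j1, k1, l1, i2, j2, k2, l2) (i1', j1', k1', l1', i2', j2', k2', l2')"
  and
    pump_case_10: "sorted [j1, i1', l1', k1, j2, i2', l2', k2] \<Longrightarrow>
      pump_cases (i1, j1, k1, l1, i2, j2, k2, l2) (i1', j1', k1', l1', i2', j2', k2', l2')"
  and
    pump_case_11a: "sorted [j1, i1', l2', k1] \<Longrightarrow>
      pump_cases (i1, j1, k1, l1, i2, j2, k2, l2) (i1', j1', k1', l1', i2', j2', k2', l2')"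
  and
    pump_case_11b: "sorted [j2, i1', l2', k2] \<Longrightarrow>
      pump_cases (i1, j1, k1, l1, i2, j2, k2, l2) (i1', j1', k1', l1', i2', j2', k2', l2')"
  and
    pump_case_12: "sorted [l1, i1', l2', i2] \<Longrightarrow>
      pump_cases (i1, j1, k1, l1, i2, j2, k2, l2) (i1', j1', k1', l1', i2', j2', k2', l2')"
  unfolding pump_cases_def prod.case by blast+

lemma pump_cases_of_within_or_equal:
  fixes a0 a1 a2 a3 b0 b1 b2 b3 c0 c1 c2 c3 d0 d1 d2 d3 :: nat
  assumes quads: "a0 < a1" "a1 < a2" "a2 < a3" "b0 < b1" "b1 < b2" "b2 < b3"
    "c0 < c1" "c1 < c2" "c2 < c3" "d0 < d1" "d1 < d2" "d2 < d3"
    and pumps: "a0 < b0" "b1 < a1" "a2 < b2" "b3 < a3" "c0 < d0" "d1 < c1" "c2 < d2" "d3 < c3"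
    and ac: "quad_within_or_after a0 a1 a2 a3 c0 c1 c2 c3 \<or> (a0 = c0 \<and> a1 = c1 \<and> a2 = c2 \<and> a3 = c3)"
    and bc: "quads_laminar b0 b1 b2 b3 c0 c1 c2 c3"
    and bd: "quads_laminar b0 b1 b2 b3 d0 d1 d2 d3"
  shows "pump_cases (a0, b0, b1, a1, a2, b2, b3, a3) (c0, d0, d1, c1, c2, d2, d3, c3)"
  using ac unfolding quad_within_or_after_def
  \<comment> \<open>The position of \<open>c\<close> in \<open>a\<close> leaves a few candidate configurations; the positions of
    \<open>b\<close> relative to \<open>c\<close> and \<open>d\<close> decide among them or are contradictory.\<close>
proof (elim disjE conjE)
  assume "a3 < c0"
  then show ?thesis by (intro pump_case_1) simp
next
  assume "a0 < c0" "c3 < a1"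
  with quads pumps show ?thesis
    by - (rule quads_laminarE[OF bc]; (linarith | rule pump_case_2a pump_case_11a pump_case_9a;
          simp only: sorted2_simps simp_thms; intro conjI; linarith))
next
  assume "a1 < c0" "c3 < a2"
  with quads show ?thesis
    by - (rule pump_case_12; simp only: sorted2_simps simp_thms; intro conjI; linarith)
next
  assume "a2 < c0" "c3 < a3"
  with quads pumps show ?thesis
    by - (rule quads_laminarE[OF bc]; (linarith | rule pump_case_2b pump_case_11b pump_case_9b;
          simp only: sorted2_simps simp_thms; intro conjI; linarith))
next
  assume "a0 < c0" "c1 < a1" "a2 < c2" "c3 < a3"
  with quads pumps show ?thesis
    by - (rule quads_laminarE[OF bc]; (linarith | rule quads_laminarE[OF bd];
          (linarith | rule pump_case_7 pump_case_8 pump_case_10 pump_case_3 pump_case_4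
            pump_case_5 pump_case_6; simp only: sorted2_simps simp_thms; intro conjI; linarith)))
next
  assume "a0 = c0" "a1 = c1" "a2 = c2" "a3 = c3"
  with quads pumps show ?thesis
    by - (rule quads_laminarE[OF bd]; (linarith | rule pump_case_3 pump_case_4 pump_case_5
          pump_case_6; simp only: sorted2_simps simp_thms; intro conjI; linarith))
qed

lemma pump_cases_of_laminar_quads:
  fixes a0 a1 a2 a3 b0 b1 b2 b3 c0 c1 c2 c3 d0 d1 d2 d3 :: nat
  assumes quads: "a0 < a1" "a1 < a2" "a2 < a3" "b0 < b1" "b1 < b2" "b2 < b3"
    "c0 < c1" "c1 < c2" "c2 < c3" "d0 < d1" "d1 < d2" "d2 < d3"
    and pumps: "a0 < b0" "b1 < a1" "a2 < b2" "b3 < a3" "c0 < d0" "d1 < c1" "c2 < d2" "d3 < c3"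
    and laminar: "quads_laminar a0 a1 a2 a3 c0 c1 c2 c3" "quads_laminar a0 a1 a2 a3 d0 d1 d2 d3"
      "quads_laminar b0 b1 b2 b3 c0 c1 c2 c3" "quads_laminar b0 b1 b2 b3 d0 d1 d2 d3"
  shows "pump_cases (a0, b0, b1, a1, a2, b2, b3, a3) (c0, d0, d1, c1, c2, d2, d3, c3)
       \<or> pump_cases (c0, d0, d1, c1, c2, d2, d3, c3) (a0, b0, b1, a1, a2, b2, b3, a3)"
proof -
  consider "quad_within_or_after a0 a1 a2 a3 c0 c1 c2 c3 \<or> (a0 = c0 \<and> a1 = c1 \<and> a2 = c2 \<and> a3 = c3)"
    | "quad_within_or_after c0 c1 c2 c3 a0 a1 a2 a3"
    using laminar(1) unfolding quads_laminar_def by blast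
  then show ?thesis
  proof cases
    case 1
    then show ?thesis
      using pump_cases_of_within_or_equal[OF quads pumps _ laminar(3,4)] by blast
  next
    case 2
    then show ?thesis
      using pump_cases_of_within_or_equal[of c0 c1 c2 c3 d0 d1 d2 d3 a0 a1 a2 a3 b0 b1 b2 b3]
        quads pumps quads_laminar_sym[OF laminar(2)] quads_laminar_sym[OF laminar(4)]
      by blast
  qed
qed

section \<open>Order of elements in a list\<close>

definition precedes :: "'x list \<Rightarrow> 'x \<Rightarrow> 'x \<Rightarrow> bool" where
  "precedes L a b \<longleftrightarrow> (\<exists>xs ys zs. L = xs @ a # ys @ b # zs)"

lemma precedes_Nil [simp]: "\<not> precedes [] a b"
  unfolding precedes_def by simp

lemma precedes_Cons [simp]: "precedes (x # xs) a b \<longleftrightarrow> (x = a \<and> b \<in> set xs) \<or> precedes xs a b"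
proof
  assume "precedes (x # xs) a b"
  then obtain us ys zs where "x # xs = us @ a # ys @ b # zs"
    unfolding precedes_def by blast
  then show "(x = a \<and> b \<in> set xs) \<or> precedes xs a b"
    unfolding precedes_def by (cases us) auto
next
  assume "(x = a \<and> b \<in> set xs) \<or> precedes xs a b"
  then show "precedes (x # xs) a b"
  proof
    assume "x = a \<and> b \<in> set xs"
    then obtain ys zs where "x # xs = [] @ a # ys @ b # zs"
      by (auto dest: split_list)
    then show ?thesis unfolding precedes_def by blast
  next
    assume "precedes xs a b"
    then obtain us ys zs where "x # xs = (x # us) @ a # ys @ b # zs"
      unfolding precedes_def by auto
    then show ?thesis unfolding precedes_def by blast
  qed
qed

lemma precedes_append [simp]:
  "precedes (xs @ ys) a b \<longleftrightarrow> precedes xs a b \<or> precedes ys a b \<or> (a \<in> set xs \<and> b \<in> set ys)"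
  by (induction xs) auto

lemma precedes_mem: "precedes L a b \<Longrightarrow> a \<in> set L \<and> b \<in> set L"
  unfolding precedes_def by auto

definition keeps_order :: "'x list \<Rightarrow> 'x list \<Rightarrow> bool" where
  "keeps_order L L' \<longleftrightarrow> (\<forall>a b. precedes L a b \<longrightarrow> precedes L' a b)"

lemma keeps_order_trans: "keeps_order L L' \<Longrightarrow> keeps_order L' L'' \<Longrightarrow> keeps_order L L''"
  unfolding keeps_order_def by blast

lemma keeps_order_append_left: "keeps_order xs (xs @ ys)"
  and keeps_order_append_right: "keeps_order ys (xs @ ys)"
  and keeps_order_middle: "keeps_order ys (xs @ ys @ zs)"
  unfolding keeps_order_def by auto

section \<open>Marked yields\<close>

fun is_mark :: "'a msym \<Rightarrow> bool" where
  "is_mark (Mark q k) = True"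
| "is_mark MHole = False"
| "is_mark (MLet a) = False"

abbreviation marks :: "'a msym list \<Rightarrow> 'a msym list" where
  "marks L \<equiv> filter is_mark L"

definition keeps_order_off_hole :: "'a msym list \<Rightarrow> 'a msym list \<Rightarrow> bool" where
  "keeps_order_off_hole L L' \<longleftrightarrow>
     (\<forall>a b. a \<noteq> MHole \<longrightarrow> b \<noteq> MHole \<longrightarrow> precedes L a b \<longrightarrow> precedes L' a b)"

lemma keeps_order_imp_off_hole: "keeps_order L L' \<Longrightarrow> keeps_order_off_hole L L'"
  unfolding keeps_order_def keeps_order_off_hole_def by blast

lemma keeps_order_off_hole_trans:
  "keeps_order_off_hole L L' \<Longrightarrow> keeps_order_off_hole L' L'' \<Longrightarrow> keeps_order_off_hole L L''"
  unfolding keeps_order_off_hole_def by blast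

lemma keeps_order_off_hole_fill:
  "MHole \<notin> set X1 \<Longrightarrow> keeps_order_off_hole (X1 @ MHole # X2) (X1 @ ys @ X2)"
  unfolding keeps_order_off_hole_def by auto

lemma mark_hole_no_hole: "MHole \<notin> set xs \<Longrightarrow> mark_hole p xs = xs"
  by (induction xs) auto

lemma mark_hole_first_hole:
  "MHole \<notin> set X1 \<Longrightarrow> mark_hole p (X1 @ MHole # X2) = X1 @ Mark p 1 # MHole # Mark p 2 # X2"
  by (induction X1) auto

lemma msubst_first_hole: "MHole \<notin> set X1 \<Longrightarrow> msubst (X1 @ MHole # X2) ys = X1 @ ys @ X2"
  by (induction X1) auto

lemma set_mark_hole_subset: "set (mark_hole p xs) \<subseteq> set xs \<union> {Mark p 1, Mark p 2}"
  by (induction xs) auto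

lemma set_msubst_subset: "set (msubst xs ys) \<subseteq> set xs \<union> set ys"
  by (induction xs) auto

lemma set_wrap_subset: "set (wrap p xs) \<subseteq> set xs \<union> {Mark p 0, Mark p 1, Mark p 2, Mark p 3}"
  unfolding wrap_def using set_mark_hole_subset by fastforce

lemma wrap_cases:
  obtains "MHole \<notin> set xs" "wrap p xs = Mark p 0 # xs @ [Mark p 3]"
  | X1 X2 where "xs = X1 @ MHole # X2" "MHole \<notin> set X1"
      "wrap p xs = Mark p 0 # X1 @ Mark p 1 # MHole # Mark p 2 # X2 @ [Mark p 3]"
proof (cases "MHole \<in> set xs")
  case True
  then obtain X1 X2 where "xs = X1 @ MHole # X2" "MHole \<notin> set X1"
    by (metis split_list_first)
  with that(2) show ?thesis unfolding wrap_def by (simp add: mark_hole_first_hole)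
next
  case False
  with that(1) show ?thesis unfolding wrap_def by (simp add: mark_hole_no_hole)
qed

lemma keeps_order_wrap: "keeps_order xs (wrap p xs)"
  unfolding keeps_order_def by (cases xs p rule: wrap_cases) auto

lemma precedes_wrap: "precedes xs a b \<Longrightarrow> precedes (wrap p xs) a b"
  using keeps_order_wrap unfolding keeps_order_def by blast

lemma hole_in_wrap_iff: "MHole \<in> set (wrap p xs) \<longleftrightarrow> MHole \<in> set xs"
  by (cases xs p rule: wrap_cases) auto

lemma distinct_marks_wrap:
  "distinct (marks xs) \<Longrightarrow> \<forall>k. Mark p k \<notin> set xs \<Longrightarrow> distinct (marks (wrap p xs))"
  by (cases xs p rule: wrap_cases) auto

definition single_hole :: "'a msym list \<Rightarrow> bool" where
  "single_hole L \<longleftrightarrow> (\<exists>X1 X2. L = X1 @ MHole # X2 \<and> MHole \<notin> set X1 \<and> MHole \<notin> set X2)"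

lemma single_hole_mem: "single_hole L \<Longrightarrow> MHole \<in> set L"
  unfolding single_hole_def by auto

lemma single_hole_split_iff:
  "single_hole (X1 @ MHole # X2) \<longleftrightarrow> MHole \<notin> set X1 \<and> MHole \<notin> set X2"
proof
  assume "single_hole (X1 @ MHole # X2)"
  then obtain Y1 Y2 where "X1 @ MHole # X2 = Y1 @ MHole # Y2" "MHole \<notin> set Y1" "MHole \<notin> set Y2"
    unfolding single_hole_def by blast
  then show "MHole \<notin> set X1 \<and> MHole \<notin> set X2"
    using append_Cons_eq_iff[of MHole Y1 Y2 X1 X2] by auto
qed (auto simp: single_hole_def)

lemma single_hole_singleton: "single_hole [MHole]"
  using single_hole_split_iff[of "[]" "[]"] by simp

lemma single_hole_wrap:
  assumes "single_hole xs"
  shows "single_hole (wrap p xs)"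
proof (cases xs p rule: wrap_cases)
  case 1
  then show ?thesis using single_hole_mem[OF assms] by simp
next
  case (2 X1 X2)
  then have "MHole \<notin> set X2"
    using assms by (simp add: single_hole_split_iff)
  with 2 have "single_hole ((Mark p 0 # X1 @ [Mark p 1]) @ MHole # (Mark p 2 # X2 @ [Mark p 3]))"
    by (subst single_hole_split_iff) simp
  with 2 show ?thesis by simp
qed

lemma single_hole_append_left: "single_hole xs \<Longrightarrow> MHole \<notin> set ys \<Longrightarrow> single_hole (xs @ ys)"
  unfolding single_hole_def by fastforce

lemma single_hole_append_right: "single_hole ys \<Longrightarrow> MHole \<notin> set xs \<Longrightarrow> single_hole (xs @ ys)"
  unfolding single_hole_def by (metis Un_iff append.assoc append_Cons set_append)

lemma single_hole_middle:
  "single_hole ys \<Longrightarrow> MHole \<notin> set X1 \<Longrightarrow> MHole \<notin> set X2 \<Longrightarrow> single_hole (X1 @ ys @ X2)"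
  by (metis single_hole_append_left single_hole_append_right)

lemma myield_mark_prefix: "Mark q k \<in> set (myield p t) \<Longrightarrow> \<exists>r. q = p @ r"
proof (induction p t arbitrary: q rule: myield.induct)
  case (1 p A a)
  then show ?case using set_wrap_subset[of p "[msym_of a]"] by (cases a) auto
next
  case (5 p A B C l r)
  then show ?case
    using set_wrap_subset[of p "myield (p @ [0]) l @ myield (p @ [1]) r"] by fastforce
next
  case (6 p A B C l r)
  then show ?case
    using set_wrap_subset[of p "msubst (myield (p @ [0]) l) (myield (p @ [1]) r)"]
      set_msubst_subset[of "myield (p @ [0]) l" "myield (p @ [1]) r"]
    by fastforce
qed (auto dest!: set_wrap_subset[THEN subsetD])

lemma myield_child_no_parent_mark: "Mark p k \<notin> set (myield (p @ [d]) t)"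
  using myield_mark_prefix[of p k "p @ [d]" t] by auto

lemma myield_children_marks_disjoint:
  "Mark q k \<in> set (myield (p @ [0]) l) \<Longrightarrow> Mark q k \<notin> set (myield (p @ [1]) r)"
  using myield_mark_prefix[of q k "p @ [0]" l] myield_mark_prefix[of q k "p @ [1]" r] by auto

lemma myield_eq_wrap: "\<exists>xs. myield p t = wrap p xs"
  by (cases "(p, t)" rule: myield.cases) auto

section \<open>Laminar markers\<close>

definition marks_ordered :: "'a msym list \<Rightarrow> nat list \<Rightarrow> bool" where
  "marks_ordered L q \<longleftrightarrow>
     precedes L (Mark q 0) (Mark q 1) \<and> precedes L (Mark q 1) (Mark q 2) \<and> precedes L (Mark q 2) (Mark q 3)"

definition hole_compatible :: "'a msym list \<Rightarrow> nat list \<Rightarrow> bool" where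
  "hole_compatible L q \<longleftrightarrow> precedes L MHole (Mark q 0) \<or> precedes L (Mark q 3) MHole
     \<or> (precedes L (Mark q 1) MHole \<and> precedes L MHole (Mark q 2))"

definition marks_within_or_after :: "'a msym list \<Rightarrow> nat list \<Rightarrow> nat list \<Rightarrow> bool" where
  "marks_within_or_after L x y \<longleftrightarrow> precedes L (Mark x 3) (Mark y 0)
     \<or> (precedes L (Mark x 0) (Mark y 0) \<and> precedes L (Mark y 3) (Mark x 1))
     \<or> (precedes L (Mark x 1) (Mark y 0) \<and> precedes L (Mark y 3) (Mark x 2))
     \<or> (precedes L (Mark x 2) (Mark y 0) \<and> precedes L (Mark y 3) (Mark x 3))
     \<or> (precedes L (Mark x 0) (Mark y 0) \<and> precedes L (Mark y 1) (Mark x 1)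
        \<and> precedes L (Mark x 2) (Mark y 2) \<and> precedes L (Mark y 3) (Mark x 3))"

definition marks_laminar :: "'a msym list \<Rightarrow> nat list \<Rightarrow> nat list \<Rightarrow> bool" where
  "marks_laminar L x y \<longleftrightarrow> marks_within_or_after L x y \<or> marks_within_or_after L y x"

lemma marks_laminar_sym: "marks_laminar L x y \<Longrightarrow> marks_laminar L y x"
  unfolding marks_laminar_def by blast

text \<open>Only nodes of rank 1 receive the markers \<open>Mark q 1\<close> and \<open>Mark q 2\<close> (around their hole),
  so the invariant constrains exactly the nodes of rank 1.\<close>

definition laminar_marks :: "'a msym list \<Rightarrow> bool" where
  "laminar_marks L \<longleftrightarrow> (\<forall>q. Mark q 1 \<in> set L \<longrightarrow>
     marks_ordered L q \<and> (MHole \<in> set L \<longrightarrow> hole_compatible L q)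
     \<and> (\<forall>q'. Mark q' 1 \<in> set L \<longrightarrow> q \<noteq> q' \<longrightarrow> marks_laminar L q q'))"

lemma laminar_marksI:
  assumes "\<And>q. Mark q 1 \<in> set L \<Longrightarrow> marks_ordered L q"
    and "\<And>q. Mark q 1 \<in> set L \<Longrightarrow> MHole \<in> set L \<Longrightarrow> hole_compatible L q"
    and "\<And>q q'. Mark q 1 \<in> set L \<Longrightarrow> Mark q' 1 \<in> set L \<Longrightarrow> q \<noteq> q' \<Longrightarrow> marks_laminar L q q'"
  shows "laminar_marks L"
  using assms unfolding laminar_marks_def by blast

lemma laminar_marksD:
  assumes "laminar_marks L" "Mark q 1 \<in> set L"
  shows "marks_ordered L q"
    and "MHole \<in> set L \<Longrightarrow> hole_compatible L q"
    and "Mark q' 1 \<in> set L \<Longrightarrow> q \<noteq> q' \<Longrightarrow> marks_laminar L q q'"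
  using assms unfolding laminar_marks_def by blast+

lemma marks_ordered_mem:
  "marks_ordered L q \<Longrightarrow> Mark q 0 \<in> set L \<and> Mark q 1 \<in> set L \<and> Mark q 2 \<in> set L \<and> Mark q 3 \<in> set L"
  unfolding marks_ordered_def by (auto dest: precedes_mem)

lemma marks_ordered_lift:
  "marks_ordered L q \<Longrightarrow> keeps_order_off_hole L L' \<Longrightarrow> marks_ordered L' q"
  unfolding marks_ordered_def keeps_order_off_hole_def by blast

lemma marks_laminar_lift:
  "marks_laminar L x y \<Longrightarrow> keeps_order_off_hole L L' \<Longrightarrow> marks_laminar L' x y"
  unfolding marks_laminar_def marks_within_or_after_def keeps_order_off_hole_def
  by (metis msym.distinct(6))

definition marks_pumped :: "'a msym list \<Rightarrow> nat list \<Rightarrow> nat list \<Rightarrow> bool" where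
  "marks_pumped L x y \<longleftrightarrow> precedes L (Mark x 0) (Mark y 0) \<and> precedes L (Mark y 1) (Mark x 1)
     \<and> precedes L (Mark x 2) (Mark y 2) \<and> precedes L (Mark y 3) (Mark x 3)"

lemma marks_pumped_lift:
  "marks_pumped L x y \<Longrightarrow> keeps_order_off_hole L L' \<Longrightarrow> marks_pumped L' x y"
  unfolding marks_pumped_def keeps_order_off_hole_def by blast

lemma laminar_marks_lift:
  assumes "laminar_marks L" "keeps_order_off_hole L L'" "Mark q 1 \<in> set L"
  shows "marks_ordered L' q"
    and "Mark q' 1 \<in> set L \<Longrightarrow> q \<noteq> q' \<Longrightarrow> marks_laminar L' q q'"
  using laminar_marksD[OF assms(1,3)] marks_ordered_lift marks_laminar_lift assms(2) by blast+

lemma laminar_marks_lift_hole: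
  "laminar_marks L \<Longrightarrow> keeps_order L L' \<Longrightarrow> Mark q 1 \<in> set L \<Longrightarrow> MHole \<in> set L \<Longrightarrow> hole_compatible L' q"
  using laminar_marksD(2) unfolding hole_compatible_def keeps_order_def by blast

lemma hole_compatibleE:
  assumes "hole_compatible (X1 @ MHole # X2) q" "MHole \<notin> set X1" "MHole \<notin> set X2"
  obtains "Mark q 0 \<in> set X2" | "Mark q 3 \<in> set X1" | "Mark q 1 \<in> set X1" "Mark q 2 \<in> set X2"
  using assms unfolding hole_compatible_def by (auto dest: precedes_mem)

lemma laminar_marks_no_marks: "(\<And>q. Mark q 1 \<notin> set L) \<Longrightarrow> laminar_marks L"
  unfolding laminar_marks_def by blast

lemma marks_within_or_after_wrap_hole:
  assumes "marks_ordered (X1 @ MHole # X2) q" "hole_compatible (X1 @ MHole # X2) q"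
    and "MHole \<notin> set X1" "MHole \<notin> set X2"
  shows "marks_within_or_after (Mark p 0 # X1 @ Mark p 1 # MHole # Mark p 2 # X2 @ [Mark p 3]) p q"
proof -
  have mem: "Mark q k \<in> set X1 \<or> Mark q k \<in> set X2" if "k \<in> {0, 1, 2, 3}" for k
    using marks_ordered_mem[OF assms(1)] that by auto
  from assms(2-4) show ?thesis
    by (rule hole_compatibleE) (use mem in \<open>auto simp: marks_within_or_after_def\<close>)
qed

lemma laminar_marks_wrap:
  assumes lam: "laminar_marks xs" and hole: "MHole \<in> set xs \<Longrightarrow> single_hole xs"
  shows "laminar_marks (wrap p xs)"
proof (cases xs p rule: wrap_cases)
  case 1
  note lift = laminar_marks_lift[OF lam keeps_order_imp_off_hole[OF keeps_order_wrap[of xs p]]]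
  show ?thesis
  proof (rule laminar_marksI)
    fix q assume "Mark q 1 \<in> set (wrap p xs)"
    then have q: "Mark q 1 \<in> set xs"
      using 1 by simp
    then show "marks_ordered (wrap p xs) q"
      by (rule lift(1))
    show "hole_compatible (wrap p xs) q" if "MHole \<in> set (wrap p xs)"
      using that 1 by simp
    fix q' assume "Mark q' 1 \<in> set (wrap p xs)" "q \<noteq> q'"
    then show "marks_laminar (wrap p xs) q q'"
      using 1 lift(2)[OF q] by simp
  qed
next
  case (2 X1 X2)
  let ?W = "wrap p xs"
  have X2: "MHole \<notin> set X2"
    using hole 2 by (simp add: single_hole_split_iff)
  have old: "Mark q 1 \<in> set xs" if "Mark q 1 \<in> set ?W" "q \<noteq> p" for q
    using that 2 by auto
  note lift = laminar_marks_lift[OF lam keeps_order_imp_off_hole[OF keeps_order_wrap[of xs p]]]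
  note lift_hole = laminar_marks_lift_hole[OF lam keeps_order_wrap[of xs p]]
  have new: "marks_laminar ?W p q" if "Mark q 1 \<in> set ?W" "q \<noteq> p" for q
    using marks_within_or_after_wrap_hole[of X1 X2 q p] laminar_marksD[OF lam old[OF that]] 2 X2
    unfolding marks_laminar_def by simp
  show ?thesis
  proof (rule laminar_marksI)
    fix q assume q: "Mark q 1 \<in> set ?W"
    show "marks_ordered ?W q"
      using 2 lift(1)[OF old[OF q]] by (cases "q = p") (simp_all add: marks_ordered_def)
    show "hole_compatible ?W q"
      using 2 lift_hole[OF old[OF q]] by (cases "q = p") (simp_all add: hole_compatible_def)
    fix q' assume q': "Mark q' 1 \<in> set ?W" "q \<noteq> q'"
    show "marks_laminar ?W q q'"
      using new[OF q] new[OF q'(1)] lift(2)[OF old[OF q] old[OF q'(1)]] q'(2) marks_laminar_sym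
      by (cases "q = p"; cases "q' = p") auto
  qed
qed

lemma laminar_marks_combine:
  assumes lam: "laminar_marks A" "laminar_marks B"
    and keep: "keeps_order_off_hole A C" "keeps_order_off_hole B C"
    and marked: "\<And>q. Mark q 1 \<in> set C \<Longrightarrow> Mark q 1 \<in> set A \<or> Mark q 1 \<in> set B"
    and hole: "\<And>q. Mark q 1 \<in> set C \<Longrightarrow> MHole \<in> set C \<Longrightarrow> hole_compatible C q"
    and cross: "\<And>q q'. Mark q 1 \<in> set A \<Longrightarrow> Mark q' 1 \<in> set B \<Longrightarrow> marks_laminar C q q'"
  shows "laminar_marks C"
proof (rule laminar_marksI)
  note lift_A = laminar_marks_lift[OF lam(1) keep(1)]
  note lift_B = laminar_marks_lift[OF lam(2) keep(2)]
  fix q assume q: "Mark q 1 \<in> set C"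
  show "marks_ordered C q"
    using marked[OF q] lift_A(1) lift_B(1) by blast
  show "hole_compatible C q" if "MHole \<in> set C"
    using q that by (rule hole)
  fix q' assume q': "Mark q' 1 \<in> set C" "q \<noteq> q'"
  from marked[OF q] marked[OF q'(1)] show "marks_laminar C q q'"
  proof (elim disjE)
    assume "Mark q 1 \<in> set A" "Mark q' 1 \<in> set A"
    then show ?thesis using lift_A(2) q'(2) by blast
  next
    assume "Mark q 1 \<in> set A" "Mark q' 1 \<in> set B"
    then show ?thesis by (rule cross)
  next
    assume "Mark q 1 \<in> set B" "Mark q' 1 \<in> set A"
    then show ?thesis using marks_laminar_sym[OF cross] by blast
  next
    assume "Mark q 1 \<in> set B" "Mark q' 1 \<in> set B"
    then show ?thesis using lift_B(2) q'(2) by blast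
  qed
qed

lemma hole_compatible_append:
  assumes xs: "laminar_marks xs" and ys: "laminar_marks ys"
    and q: "Mark q 1 \<in> set (xs @ ys)" and hole: "MHole \<in> set (xs @ ys)"
  shows "hole_compatible (xs @ ys) q"
proof -
  consider "Mark q 1 \<in> set xs" "MHole \<in> set xs" | "Mark q 1 \<in> set ys" "MHole \<in> set ys"
    | "Mark q 1 \<in> set xs" "MHole \<in> set ys" | "Mark q 1 \<in> set ys" "MHole \<in> set xs"
    using q hole by auto
  then show ?thesis
  proof cases
    case 1
    then show ?thesis using laminar_marks_lift_hole[OF xs keeps_order_append_left] by blast
  next
    case 2
    then show ?thesis using laminar_marks_lift_hole[OF ys keeps_order_append_right] by blast
  next
    case 3
    then have "precedes (xs @ ys) (Mark q 3) MHole"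
      using marks_ordered_mem[OF laminar_marksD(1)[OF xs]] by simp
    then show ?thesis unfolding hole_compatible_def by blast
  next
    case 4
    then have "precedes (xs @ ys) MHole (Mark q 0)"
      using marks_ordered_mem[OF laminar_marksD(1)[OF ys]] by simp
    then show ?thesis unfolding hole_compatible_def by blast
  qed
qed

lemma laminar_marks_append:
  assumes xs: "laminar_marks xs" and ys: "laminar_marks ys"
  shows "laminar_marks (xs @ ys)"
proof (rule laminar_marks_combine[OF xs ys])
  show "keeps_order_off_hole xs (xs @ ys)" "keeps_order_off_hole ys (xs @ ys)"
    by (intro keeps_order_imp_off_hole keeps_order_append_left keeps_order_append_right)+
  show "hole_compatible (xs @ ys) q" if "Mark q 1 \<in> set (xs @ ys)" "MHole \<in> set (xs @ ys)" for q
    using hole_compatible_append[OF xs ys that] .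
  show "marks_laminar (xs @ ys) x y" if "Mark x 1 \<in> set xs" "Mark y 1 \<in> set ys" for x y
  proof -
    have "precedes (xs @ ys) (Mark x 3) (Mark y 0)"
      using marks_ordered_mem[OF laminar_marksD(1)[OF xs that(1)]]
        marks_ordered_mem[OF laminar_marksD(1)[OF ys that(2)]] by simp
    then show ?thesis unfolding marks_laminar_def marks_within_or_after_def by blast
  qed
qed simp

lemma marks_laminar_fill:
  assumes "hole_compatible (X1 @ MHole # X2) q" "MHole \<notin> set X1" "MHole \<notin> set X2"
    and "marks_ordered ys q'"
  shows "marks_laminar (X1 @ ys @ X2) q q'"
proof -
  let ?C = "X1 @ ys @ X2"
  have ys: "Mark q' 0 \<in> set ys" "Mark q' 3 \<in> set ys"
    using marks_ordered_mem[OF assms(4)] by blast+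
  from assms(1-3) show ?thesis
  proof (rule hole_compatibleE)
    assume "Mark q 0 \<in> set X2"
    then have "precedes ?C (Mark q' 3) (Mark q 0)"
      using ys by simp
    then show ?thesis unfolding marks_laminar_def marks_within_or_after_def by blast
  next
    assume "Mark q 3 \<in> set X1"
    then have "precedes ?C (Mark q 3) (Mark q' 0)"
      using ys by simp
    then show ?thesis unfolding marks_laminar_def marks_within_or_after_def by blast
  next
    assume "Mark q 1 \<in> set X1" "Mark q 2 \<in> set X2"
    then have "precedes ?C (Mark q 1) (Mark q' 0)" "precedes ?C (Mark q' 3) (Mark q 2)"
      using ys by simp_all
    then show ?thesis unfolding marks_laminar_def marks_within_or_after_def by blast
  qed
qed

lemma hole_compatible_fill:
  assumes lam_l: "laminar_marks (X1 @ MHole # X2)" and lam_r: "laminar_marks ys"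
    and X: "MHole \<notin> set X1" "MHole \<notin> set X2"
    and q: "Mark q 1 \<in> set (X1 @ ys @ X2)" and hole: "MHole \<in> set (X1 @ ys @ X2)"
  shows "hole_compatible (X1 @ ys @ X2) q"
proof -
  have hole_r: "MHole \<in> set ys"
    using hole X by auto
  from q have "Mark q 1 \<in> set (X1 @ MHole # X2) \<or> Mark q 1 \<in> set ys"
    by auto
  then show ?thesis
  proof
    assume "Mark q 1 \<in> set (X1 @ MHole # X2)"
    with lam_l have "hole_compatible (X1 @ MHole # X2) q"
      by (auto dest: laminar_marksD(2))
    from this X show ?thesis
      by (rule hole_compatibleE) (use hole_r in \<open>auto simp: hole_compatible_def\<close>)
  next
    assume "Mark q 1 \<in> set ys"
    then show ?thesis
      using laminar_marks_lift_hole[OF lam_r keeps_order_middle] hole_r by blast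
  qed
qed

lemma laminar_marks_fill:
  assumes lam_l: "laminar_marks (X1 @ MHole # X2)" and lam_r: "laminar_marks ys"
    and X: "MHole \<notin> set X1" "MHole \<notin> set X2"
  shows "laminar_marks (X1 @ ys @ X2)"
proof (rule laminar_marks_combine[OF lam_l lam_r])
  show "keeps_order_off_hole (X1 @ MHole # X2) (X1 @ ys @ X2)"
    using X(1) by (rule keeps_order_off_hole_fill)
  show "keeps_order_off_hole ys (X1 @ ys @ X2)"
    by (intro keeps_order_imp_off_hole keeps_order_middle)
  show "hole_compatible (X1 @ ys @ X2) q"
    if "Mark q 1 \<in> set (X1 @ ys @ X2)" "MHole \<in> set (X1 @ ys @ X2)" for q
    using hole_compatible_fill[OF lam_l lam_r X that] .
  show "marks_laminar (X1 @ ys @ X2) q q'"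
    if "Mark q 1 \<in> set (X1 @ MHole # X2)" "Mark q' 1 \<in> set ys" for q q'
    using marks_laminar_fill[OF _ X laminar_marksD(1)[OF lam_r that(2)]] laminar_marksD(2)[OF lam_l that(1)]
    by simp
qed auto

section \<open>Markers in derivation trees\<close>

lemma subtree_at_append: "subtree_at t v = Some s \<Longrightarrow> subtree_at t (v @ x) = subtree_at s x"
  by (induction t v rule: subtree_at.induct) (auto split: if_splits)

lemma wf_tree_subtree_at: "wf_tree P t \<Longrightarrow> subtree_at t v = Some s \<Longrightarrow> wf_tree P s"
  by (induction t v rule: subtree_at.induct) (auto split: if_splits)

lemma label_Leaf [simp]: "label (Leaf r) = lhs r"
  and label_Node [simp]: "label (Node r l rr) = lhs r"
  unfolding label_def by simp_all

context
  fixes \<Sigma> :: "'a set" and N :: "'n set" and P :: "('n, 'a) rule set" and S :: 'n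
    and rk :: "'n \<Rightarrow> nat"
  assumes cnf: "cnf_1dcfg \<Sigma> N P S rk"
begin

lemma rank_RConc: "RConc A B C \<in> P \<Longrightarrow> rk A = rk B + rk C \<and> rk A \<le> 1"
  and rank_RSubst: "RSubst A B C \<in> P \<Longrightarrow> rk B = 1 \<and> rk A = rk C \<and> rk C \<le> 1"
  and rank_RTerm: "RTerm A a \<in> P \<Longrightarrow> rk A = rk_sym a"
  and rank_REps: "REps A \<in> P \<Longrightarrow> rk A = 0"
  using cnf unfolding cnf_1dcfg_def by fastforce+

lemma myield_hole_rank:
  "wf_tree P t \<Longrightarrow>
     (rk (label t) = 1 \<and> single_hole (myield p t)) \<or> (rk (label t) = 0 \<and> MHole \<notin> set (myield p t))"
proof (induction t arbitrary: p)
  case (Leaf r)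
  show ?case
  proof (cases r)
    case (RTerm A a)
    with Leaf have "rk A = rk_sym a"
      by (auto dest: rank_RTerm)
    with RTerm show ?thesis
      by (cases a) (auto simp: hole_in_wrap_iff single_hole_singleton intro: single_hole_wrap)
  next
    case (REps A)
    with Leaf show ?thesis by (auto simp: hole_in_wrap_iff dest: rank_REps)
  qed (use Leaf in auto)
next
  case (Node r l rr)
  show ?case
  proof (cases r)
    case (RConc A B C)
    with Node.prems have "rk A = rk B + rk C" "rk A \<le> 1" "label l = B" "label rr = C"
      using rank_RConc by auto
    with Node.IH(1)[of "p @ [0]"] Node.IH(2)[of "p @ [1]"] Node.prems RConc show ?thesis
      by (auto simp: hole_in_wrap_iff single_hole_wrap single_hole_append_left
          single_hole_append_right dest: single_hole_mem)
  next
    case (RSubst A B C)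
    with Node have "rk B = 1" "rk A = rk C" "label l = B" "label rr = C"
      using rank_RSubst by auto
    with Node.IH(1)[of "p @ [0]"] Node.prems RSubst obtain X1 X2
      where "myield (p @ [0]) l = X1 @ MHole # X2" "MHole \<notin> set X1" "MHole \<notin> set X2"
      unfolding single_hole_def by auto
    with Node.IH(2)[of "p @ [1]"] Node.prems RSubst \<open>rk A = rk C\<close> \<open>label rr = C\<close>
    show ?thesis
      by (auto simp: hole_in_wrap_iff single_hole_wrap msubst_first_hole single_hole_middle
          dest: single_hole_mem)
  qed (use Node in auto)
qed

lemma myield_single_hole: "wf_tree P t \<Longrightarrow> MHole \<in> set (myield p t) \<Longrightarrow> single_hole (myield p t)"
  using myield_hole_rank by blast

lemma myield_hole_iff: "wf_tree P t \<Longrightarrow> MHole \<in> set (myield p t) \<longleftrightarrow> rk (label t) = 1"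
  using myield_hole_rank single_hole_mem by fastforce

lemma myield_RSubst:
  assumes "wf_tree P (Node (RSubst A B C) l r)"
  obtains X1 X2 where "myield (p @ [0]) l = X1 @ MHole # X2" "MHole \<notin> set X1" "MHole \<notin> set X2"
    and "myield p (Node (RSubst A B C) l r) = wrap p (X1 @ myield (p @ [1]) r @ X2)"
proof -
  from assms have "wf_tree P l" "rk (label l) = 1"
    using rank_RSubst by auto
  then have "single_hole (myield (p @ [0]) l)"
    using myield_hole_rank by fastforce
  then obtain X1 X2 where "myield (p @ [0]) l = X1 @ MHole # X2" "MHole \<notin> set X1" "MHole \<notin> set X2"
    unfolding single_hole_def by blast
  with that show ?thesis by (simp add: msubst_first_hole)
qed

lemma laminar_marks_myield: "wf_tree P t \<Longrightarrow> laminar_marks (myield p t)"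
proof (induction t arbitrary: p)
  case (Leaf r)
  have "laminar_marks [msym_of a]" for a :: "'a sym1"
    by (rule laminar_marks_no_marks) (cases a; simp)
  moreover have "laminar_marks []"
    by (rule laminar_marks_no_marks) simp
  ultimately show ?case
    using Leaf single_hole_singleton
    by (cases r) (auto intro!: laminar_marks_wrap)
next
  case (Node r l rr)
  show ?case
  proof (cases r)
    case (RConc A B C)
    with Node.prems have wf: "wf_tree P l" "wf_tree P rr" "rk (label l) + rk (label rr) \<le> 1"
      using rank_RConc[of A B C] by auto
    have "MHole \<in> set (myield (p @ [0]) l @ myield (p @ [1]) rr) \<Longrightarrow>
        single_hole (myield (p @ [0]) l @ myield (p @ [1]) rr)"
      using wf myield_hole_rank[OF wf(1), of "p @ [0]"] myield_hole_rank[OF wf(2), of "p @ [1]"]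
      by (auto intro: single_hole_append_left single_hole_append_right)
    with RConc wf show ?thesis
      by (auto intro!: laminar_marks_wrap laminar_marks_append Node.IH)
  next
    case (RSubst A B C)
    with Node.prems have wf: "wf_tree P l" "wf_tree P rr" by auto
    from Node.prems RSubst have "wf_tree P (Node (RSubst A B C) l rr)" by simp
    then obtain X1 X2
      where X: "myield (p @ [0]) l = X1 @ MHole # X2" "MHole \<notin> set X1" "MHole \<notin> set X2"
        and eq: "myield p (Node (RSubst A B C) l rr) = wrap p (X1 @ myield (p @ [1]) rr @ X2)"
      by (rule myield_RSubst)
    have "laminar_marks (X1 @ myield (p @ [1]) rr @ X2)"
      using laminar_marks_fill[OF _ Node.IH(2)[OF wf(2), of "p @ [1]"] X(2,3)]
        Node.IH(1)[OF wf(1), of "p @ [0]"] X(1)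
      by simp
    moreover have "MHole \<in> set (X1 @ myield (p @ [1]) rr @ X2) \<Longrightarrow>
        single_hole (X1 @ myield (p @ [1]) rr @ X2)"
      using myield_single_hole[OF wf(2)] single_hole_middle X by auto
    ultimately show ?thesis
      unfolding RSubst eq by (rule laminar_marks_wrap)
  qed (use Node.prems in auto)
qed

lemma distinct_marks_myield: "wf_tree P t \<Longrightarrow> distinct (marks (myield p t))"
proof (induction t arbitrary: p)
  case (Leaf r)
  have "Mark p k \<notin> set [msym_of a]" for a :: "'a sym1" and k
    by (cases a) simp_all
  with Leaf show ?case
    by (cases r) (auto intro!: distinct_marks_wrap)
next
  case (Node r l rr)
  have fresh: "Mark p k \<notin> set (myield (p @ [0]) l)" "Mark p k \<notin> set (myield (p @ [1]) rr)" for k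
    by (rule myield_child_no_parent_mark)+
  have disjoint: "x \<in> set (myield (p @ [0]) l) \<Longrightarrow> is_mark x \<Longrightarrow> x \<notin> set (myield (p @ [1]) rr)" for x
    by (cases x) (auto dest: myield_children_marks_disjoint)
  show ?case
  proof (cases r)
    case (RConc A B C)
    with Node fresh disjoint show ?thesis
      by (auto intro!: distinct_marks_wrap)
  next
    case (RSubst A B C)
    with Node.prems have wf: "wf_tree P l" "wf_tree P rr" by auto
    from Node.prems RSubst have "wf_tree P (Node (RSubst A B C) l rr)" by simp
    then obtain X1 X2
      where X: "myield (p @ [0]) l = X1 @ MHole # X2"
        and eq: "myield p (Node (RSubst A B C) l rr) = wrap p (X1 @ myield (p @ [1]) rr @ X2)"
      by (rule myield_RSubst)
    have "distinct (marks (X1 @ myield (p @ [1]) rr @ X2))"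
      using Node.IH(1)[OF wf(1), of "p @ [0]"] Node.IH(2)[OF wf(2), of "p @ [1]"] disjoint X by auto
    then show ?thesis
      unfolding RSubst eq using fresh X by (intro distinct_marks_wrap) auto
  qed (use Node.prems in auto)
qed

lemma myield_with_hole:
  assumes wf: "wf_tree P s" and hole: "MHole \<in> set (myield v s)"
  obtains X1 X2
  where "myield v s = Mark v 0 # X1 @ Mark v 1 # MHole # Mark v 2 # X2 @ [Mark v 3]"
    and "MHole \<notin> set X1" "MHole \<notin> set X2"
proof -
  obtain xs where xs: "myield v s = wrap v xs"
    using myield_eq_wrap by blast
  have single: "single_hole (myield v s)"
    using myield_single_hole[OF wf hole] .
  show ?thesis
  proof (cases xs v rule: wrap_cases)
    case 1
    then show ?thesis using hole xs by (simp add: hole_in_wrap_iff)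
  next
    case (2 X1 X2)
    with xs single
    have "single_hole ((Mark v 0 # X1 @ [Mark v 1]) @ MHole # (Mark v 2 # X2 @ [Mark v 3]))"
      by simp
    then have "MHole \<notin> set X2"
      by (simp only: single_hole_split_iff) simp
    with 2 xs that show ?thesis by simp
  qed
qed

lemma keeps_order_off_hole_children:
  assumes "wf_tree P (Node r l rr)"
  shows "keeps_order_off_hole (myield (p @ [0]) l) (myield p (Node r l rr))"
    and "keeps_order_off_hole (myield (p @ [1]) rr) (myield p (Node r l rr))"
proof -
  have "keeps_order_off_hole (myield (p @ [0]) l) (myield p (Node r l rr))
      \<and> keeps_order_off_hole (myield (p @ [1]) rr) (myield p (Node r l rr))"
  proof (cases r)
    case (RConc A B C)
    have "keeps_order (myield (p @ [0]) l) (myield p (Node r l rr))"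
      using RConc keeps_order_trans[OF keeps_order_append_left keeps_order_wrap] by simp
    moreover have "keeps_order (myield (p @ [1]) rr) (myield p (Node r l rr))"
      using RConc keeps_order_trans[OF keeps_order_append_right keeps_order_wrap] by simp
    ultimately show ?thesis by (simp add: keeps_order_imp_off_hole)
  next
    case (RSubst A B C)
    with assms have "wf_tree P (Node (RSubst A B C) l rr)" by simp
    then obtain X1 X2 where X: "myield (p @ [0]) l = X1 @ MHole # X2" "MHole \<notin> set X1"
      and eq: "myield p (Node (RSubst A B C) l rr) = wrap p (X1 @ myield (p @ [1]) rr @ X2)"
      by (rule myield_RSubst)
    have "keeps_order_off_hole (myield (p @ [0]) l) (myield p (Node r l rr))"
      using RSubst X eq keeps_order_off_hole_trans[OF keeps_order_off_hole_fill
          keeps_order_imp_off_hole[OF keeps_order_wrap]]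
      by simp
    moreover have "keeps_order_off_hole (myield (p @ [1]) rr) (myield p (Node r l rr))"
      using RSubst eq keeps_order_imp_off_hole[OF keeps_order_trans[OF keeps_order_middle keeps_order_wrap]]
      by simp
    ultimately show ?thesis ..
  qed (use assms in auto)
  then show "keeps_order_off_hole (myield (p @ [0]) l) (myield p (Node r l rr))"
    and "keeps_order_off_hole (myield (p @ [1]) rr) (myield p (Node r l rr))"
    by blast+
qed

lemma keeps_order_off_hole_subtree:
  "wf_tree P t \<Longrightarrow> subtree_at t r = Some s \<Longrightarrow> keeps_order_off_hole (myield (p @ r) s) (myield p t)"
proof (induction r arbitrary: p t)
  case Nil
  then show ?case unfolding keeps_order_off_hole_def by simp
next
  case (Cons d r)
  then obtain rl l rr where t: "t = Node rl l rr"
    by (cases t) auto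
  consider "d = 0" "subtree_at l r = Some s" | "d = 1" "subtree_at rr r = Some s"
    using Cons.prems(2) t by (auto split: if_splits)
  then show ?case
  proof cases
    case 1
    with Cons.prems(1) t Cons.IH[of l "p @ [0]"] show ?thesis
      using keeps_order_off_hole_trans keeps_order_off_hole_children(1) by fastforce
  next
    case 2
    with Cons.prems(1) t Cons.IH[of rr "p @ [1]"] show ?thesis
      using keeps_order_off_hole_trans keeps_order_off_hole_children(2) by fastforce
  qed
qed

lemma spans_hole_Node:
  assumes wf: "wf_tree P (Node r l rr)" and rk: "rk (lhs r) = 1"
    and child: "(d = 0 \<and> c = l) \<or> (d = 1 \<and> c = rr)"
    and span: "precedes (myield (p @ [d]) c) a MHole" "precedes (myield (p @ [d]) c) MHole b"
  shows "precedes (myield p (Node r l rr)) a MHole \<and> precedes (myield p (Node r l rr)) MHole b"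
proof (cases r)
  case (RConc A B C)
  then show ?thesis using child span by (auto simp: precedes_wrap)
next
  case (RSubst A B C)
  with wf have wf': "wf_tree P (Node (RSubst A B C) l rr)" by simp
  then obtain X1 X2 where X: "myield (p @ [0]) l = X1 @ MHole # X2" "MHole \<notin> set X1" "MHole \<notin> set X2"
    and eq: "myield p (Node (RSubst A B C) l rr) = wrap p (X1 @ myield (p @ [1]) rr @ X2)"
    by (rule myield_RSubst)
  have "rk (label rr) = 1"
    using wf' rk RSubst rank_RSubst[of A B C] by auto
  then have hole: "MHole \<in> set (myield (p @ [1]) rr)"
    using wf' myield_hole_iff by auto
  from child have "precedes (X1 @ myield (p @ [1]) rr @ X2) a MHole
      \<and> precedes (X1 @ myield (p @ [1]) rr @ X2) MHole b"
  proof (elim disjE conjE)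
    assume "d = 0" "c = l"
    then have "a \<in> set X1" "b \<in> set X2"
      using span X by (auto dest: precedes_mem)
    then show ?thesis using hole by simp
  next
    assume "d = 1" "c = rr"
    then show ?thesis using span by simp
  qed
  then show ?thesis using RSubst eq by (simp add: precedes_wrap)
qed (use wf in auto)

lemma spine_marks_around_hole:
  "wf_tree P s \<Longrightarrow> subtree_at s q = Some s' \<Longrightarrow>
    \<forall>k\<le>length q. rk (label (the (subtree_at s (take k q)))) = 1 \<Longrightarrow>
    precedes (myield v s) (Mark (v @ q) 1) MHole \<and> precedes (myield v s) MHole (Mark (v @ q) 2)"
proof (induction q arbitrary: v s)
  case Nil
  then have "MHole \<in> set (myield v s)"
    using myield_hole_iff by fastforce
  with Nil.prems(1) show ?case
    by (rule myield_with_hole) simp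
next
  case (Cons d q)
  then obtain r l rr where s: "s = Node r l rr"
    by (cases s) auto
  define c where "c = (if d = 0 then l else rr)"
  have child: "(d = 0 \<and> c = l) \<or> (d = 1 \<and> c = rr)" and sub: "subtree_at c q = Some s'"
    using Cons.prems(2) s unfolding c_def by (auto split: if_splits)
  have rk_c: "\<forall>k\<le>length q. rk (label (the (subtree_at c (take k q)))) = 1"
  proof (intro allI impI)
    fix k assume "k \<le> length q"
    then have "rk (label (the (subtree_at s (take (Suc k) (d # q))))) = 1"
      using Cons.prems(3) by auto
    then show "rk (label (the (subtree_at c (take k q)))) = 1"
      using s child by auto
  qed
  have "wf_tree P c"
    using Cons.prems(1) s child by auto
  from Cons.IH[OF this sub rk_c, of "v @ [d]"]
  have "precedes (myield (v @ [d]) c) (Mark (v @ d # q) 1) MHole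
      \<and> precedes (myield (v @ [d]) c) MHole (Mark (v @ d # q) 2)"
    by simp
  moreover have "rk (lhs r) = 1"
    using Cons.prems(3) s by (auto dest: spec[of _ 0])
  ultimately show ?case
    using spans_hole_Node[OF _ _ child] Cons.prems(1) s by blast
qed

lemma pump_marks_nested:
  assumes wf: "wf_tree P s" and q: "q \<noteq> []" and sub: "subtree_at s q = Some s'"
    and spine: "\<forall>k\<le>length q. rk (label (the (subtree_at s (take k q)))) = 1"
  shows "marks_pumped (myield v s) v (v @ q)"
proof -
  let ?L = "myield v s" and ?w = "v @ q"
  have around: "precedes ?L (Mark ?w 1) MHole" "precedes ?L MHole (Mark ?w 2)"
    using spine_marks_around_hole[OF wf sub spine] by auto
  have "marks_ordered ?L ?w"
    using laminar_marksD(1)[OF laminar_marks_myield[OF wf]] precedes_mem[OF around(1)] by blast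
  then have mem: "Mark ?w k \<in> set ?L" if "k \<in> {0, 1, 2, 3}" for k
    using marks_ordered_mem that by blast
  obtain X1 X2 where L: "?L = Mark v 0 # X1 @ Mark v 1 # MHole # Mark v 2 # X2 @ [Mark v 3]"
    and X: "MHole \<notin> set X1" "MHole \<notin> set X2"
    using myield_with_hole[OF wf] precedes_mem[OF around(1)] by blast
  have "?w \<noteq> v"
    using q by simp
  then have "Mark ?w 1 \<in> set X1" "Mark ?w 2 \<in> set X2"
    and "Mark ?w 0 \<in> set (X1 @ Mark v 1 # MHole # Mark v 2 # X2 @ [Mark v 3])"
    and "Mark ?w 3 \<in> set (Mark v 0 # X1 @ Mark v 1 # MHole # Mark v 2 # X2)"
    using around mem[of 0] mem[of 3] X unfolding L by (auto dest: precedes_mem)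
  then show ?thesis
    unfolding marks_pumped_def L by auto
qed

lemma two_pump_marks:
  assumes wf: "wf_tree P T" and pump: "two_pump rk T v v'"
  shows "marks_pumped (myield [] T) v v'"
proof -
  from pump obtain s where s: "subtree_at T v = Some s"
    unfolding two_pump_def internal_def by blast
  from pump obtain q where q: "q \<noteq> []" "v' = v @ q" and "is_node T v'"
    and "\<forall>k\<le>length q. rk (label_at T (v @ take k q)) = rk (label_at T v)"
    unfolding two_pump_def direct_desc_def by blast
  moreover have "rk (label_at T v) = 1"
    using pump unfolding two_pump_def by blast
  moreover have sub: "subtree_at T (v @ x) = subtree_at s x" for x
    using subtree_at_append[OF s] .
  ultimately obtain s' where "subtree_at s q = Some s'"
    and "\<forall>k\<le>length q. rk (label (the (subtree_at s (take k q)))) = 1"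
    unfolding is_node_def label_at_def by auto
  with wf_tree_subtree_at[OF wf s] q have "marks_pumped (myield v s) v v'"
    using pump_marks_nested by blast
  then show ?thesis
    using marks_pumped_lift keeps_order_off_hole_subtree[OF wf s, of "[]"] by simp
qed

end

section \<open>From marker indices to constituents\<close>

definition index_of :: "'x list \<Rightarrow> 'x \<Rightarrow> nat" where
  "index_of L m = length (takeWhile (\<lambda>x. x \<noteq> m) L)"

lemma takeWhile_neq_append:
  "b \<notin> set xs \<Longrightarrow> takeWhile (\<lambda>x. x \<noteq> b) (xs @ ys) = xs @ takeWhile (\<lambda>x. x \<noteq> b) ys"
  by (induction xs) auto

lemma index_of_less:
  assumes "distinct (marks L)" "is_mark a" "is_mark b" "precedes L a b"
  shows "index_of L a < index_of L b"
proof -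
  obtain xs ys zs where L: "L = xs @ a # ys @ b # zs"
    using assms(4) unfolding precedes_def by blast
  with assms(1-3) have "b \<notin> set xs" "b \<noteq> a" "b \<notin> set ys"
    by auto
  then have "takeWhile (\<lambda>x. x \<noteq> b) L = xs @ a # ys"
    unfolding L by (simp add: takeWhile_neq_append)
  then have "index_of L b = length xs + Suc (length ys)"
    unfolding index_of_def by simp
  moreover have "index_of L a \<le> length xs"
    unfolding index_of_def L by (induction xs) auto
  ultimately show ?thesis by simp
qed

lemma mpos_index_of: "mpos L m = Suc (length (filter is_mlet (take (index_of L m) L)))"
  unfolding mpos_def index_of_def by (metis takeWhile_eq_take)

lemma length_filter_take_mono:
  assumes "n \<le> m"
  shows "length (filter P (take n L)) \<le> length (filter P (take m L))"
proof -
  from assms have "take m L = take n L @ drop n (take m L)"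
    by (metis append_take_drop_id min.absorb1 take_take)
  then show ?thesis
    by (metis filter_append le_add1 length_append)
qed

lemma pump_cases_mono:
  fixes f :: "nat \<Rightarrow> nat"
  assumes "mono f"
    and "pump_cases (a1, a2, a3, a4, a5, a6, a7, a8) (b1, b2, b3, b4, b5, b6, b7, b8)"
  shows "pump_cases (f a1, f a2, f a3, f a4, f a5, f a6, f a7, f a8)
      (f b1, f b2, f b3, f b4, f b5, f b6, f b7, f b8)"
  using assms(2) unfolding pump_cases_def prod.case sorted2_simps
  by (elim disjE conjE; simp add: monoD[OF assms(1)])

lemma marks_ordered_index:
  assumes "\<And>x i y j. precedes L (Mark x i) (Mark y j) \<Longrightarrow> I x i < I y j" and "marks_ordered L x"
  shows "I x 0 < I x 1" "I x 1 < I x 2" "I x 2 < I x 3"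
  using assms unfolding marks_ordered_def by blast+

lemma marks_pumped_index:
  assumes "\<And>x i y j. precedes L (Mark x i) (Mark y j) \<Longrightarrow> I x i < I y j" and "marks_pumped L x y"
  shows "I x 0 < I y 0" "I y 1 < I x 1" "I x 2 < I y 2" "I y 3 < I x 3"
  using assms unfolding marks_pumped_def by blast+

lemma marks_within_or_after_index:
  assumes less: "\<And>x i y j. precedes L (Mark x i) (Mark y j) \<Longrightarrow> I x i < I y j"
    and "marks_within_or_after L x y"
  shows "quad_within_or_after (I x 0) (I x 1) (I x 2) (I x 3) (I y 0) (I y 1) (I y 2) (I y 3)"
  using assms(2) unfolding marks_within_or_after_def quad_within_or_after_def
  by (elim disjE conjE; blast dest: less)

lemma marks_laminar_index:
  assumes "\<And>x i y j. precedes L (Mark x i) (Mark y j) \<Longrightarrow> I x i < I y j"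
    and "marks_laminar L x y"
  shows "quads_laminar (I x 0) (I x 1) (I x 2) (I x 3) (I y 0) (I y 1) (I y 2) (I y 3)"
  using assms(2) marks_within_or_after_index[where L = L and I = I, OF assms(1)]
  unfolding marks_laminar_def quads_laminar_def by blast

lemma pump_cases_of_laminar_marks:
  fixes M :: "'a msym list"
  assumes lam: "laminar_marks M" and dist: "distinct (marks M)"
    and pumped: "marks_pumped M v v'" "marks_pumped M u u'"
  defines "I \<equiv> \<lambda>x k. index_of M (Mark x k)"
  shows "pump_cases (I v 0, I v' 0, I v' 1, I v 1, I v 2, I v' 2, I v' 3, I v 3)
                    (I u 0, I u' 0, I u' 1, I u 1, I u 2, I u' 2, I u' 3, I u 3)
       \<or> pump_cases (I u 0, I u' 0, I u' 1, I u 1, I u 2, I u' 2, I u' 3, I u 3)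
                    (I v 0, I v' 0, I v' 1, I v 1, I v 2, I v' 2, I v' 3, I v 3)"
proof (rule pump_cases_of_laminar_quads)
  have less: "precedes M (Mark x i) (Mark y j) \<Longrightarrow> I x i < I y j" for x i y j
    unfolding I_def by (rule index_of_less[OF dist]) simp_all
  have marked: "Mark x 1 \<in> set M" if "x \<in> {v, v', u, u'}" for x
    using pumped that unfolding marks_pumped_def by (auto dest: precedes_mem)
  have ordered: "I x 0 < I x 1" "I x 1 < I x 2" "I x 2 < I x 3" if "x \<in> {v, v', u, u'}" for x
    using marks_ordered_index[where L = M and I = I, OF less laminar_marksD(1)[OF lam marked[OF that]]]
    by blast+
  have laminar: "quads_laminar (I x 0) (I x 1) (I x 2) (I x 3) (I y 0) (I y 1) (I y 2) (I y 3)"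
    if "x \<in> {v, v', u, u'}" "y \<in> {v, v', u, u'}" for x y
  proof (cases "x = y")
    case True
    then show ?thesis unfolding quads_laminar_def by simp
  next
    case False
    then show ?thesis
      using marks_laminar_index[where L = M and I = I, OF less]
        laminar_marksD(3)[OF lam marked[OF that(1)] marked[OF that(2)]]
      by blast
  qed
  show "I v 0 < I v 1" "I v 1 < I v 2" "I v 2 < I v 3" "I v' 0 < I v' 1" "I v' 1 < I v' 2"
    "I v' 2 < I v' 3" "I u 0 < I u 1" "I u 1 < I u 2" "I u 2 < I u 3" "I u' 0 < I u' 1"
    "I u' 1 < I u' 2" "I u' 2 < I u' 3"
    using ordered by simp_all
  show "I v 0 < I v' 0" "I v' 1 < I v 1" "I v 2 < I v' 2" "I v' 3 < I v 3"
    "I u 0 < I u' 0" "I u' 1 < I u 1" "I u 2 < I u' 2" "I u' 3 < I u 3"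
    using marks_pumped_index[where L = M and I = I, OF less] pumped by blast+
  show "quads_laminar (I v 0) (I v 1) (I v 2) (I v 3) (I u 0) (I u 1) (I u 2) (I u 3)"
    "quads_laminar (I v 0) (I v 1) (I v 2) (I v 3) (I u' 0) (I u' 1) (I u' 2) (I u' 3)"
    "quads_laminar (I v' 0) (I v' 1) (I v' 2) (I v' 3) (I u 0) (I u 1) (I u 2) (I u 3)"
    "quads_laminar (I v' 0) (I v' 1) (I v' 2) (I v' 3) (I u' 0) (I u' 1) (I u' 2) (I u' 3)"
    using laminar by simp_all
qed

theorem lemma9:
  fixes \<Sigma> :: "'a set" and N :: "'n set" and P :: "('n,'a) rule set"
    and S :: 'n and rk :: "'n \<Rightarrow> nat"
    and T :: "('n,'a) dtree" and w :: "'a list"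
    and v v' u u' :: "nat list"
  assumes "cnf_1dcfg \<Sigma> N P S rk"
    and "deriv_tree P S T w"
    and "two_pump rk T v v'"
    and "two_pump rk T u u'"
  shows "pump_cases (pump_tuple T v v') (pump_tuple T u u')
       \<or> pump_cases (pump_tuple T u u') (pump_tuple T v v')"
proof -
  have wf: "wf_tree P T"
    using assms(2) unfolding deriv_tree_def by blast
  let ?M = "myield [] T" and ?I = "\<lambda>x k. index_of (myield [] T) (Mark x k)"
  define pos where "pos n = Suc (length (filter is_mlet (take n ?M)))" for n
  have "mono pos"
    unfolding pos_def by (rule monoI) (simp add: length_filter_take_mono)
  have tuple: "pump_tuple T x y = (pos (?I x 0), pos (?I y 0), pos (?I y 1), pos (?I x 1),
      pos (?I x 2), pos (?I y 2), pos (?I y 3), pos (?I x 3))" for x y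
    unfolding pump_tuple_def constituent_def Let_def pos_def by (simp add: mpos_index_of)
  show ?thesis
    unfolding tuple
    using pump_cases_of_laminar_marks[OF laminar_marks_myield[OF assms(1) wf]
        distinct_marks_myield[OF assms(1) wf] two_pump_marks[OF assms(1) wf assms(3)]
        two_pump_marks[OF assms(1) wf assms(4)]]
      pump_cases_mono[OF \<open>mono pos\<close>]
    by blast
qed

end
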